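(* Assume CH. Let $\mathcal{I}$ be a $\sigma$-ideal on $\mathbb{R}$ satisfying the standing assumptions. Then there exists a partition of $\mathbb{R}$ into $\mathfrak{c}$ many pairwise disjoint strong $\mathcal{I}$-Luzin sets.
   Context: Standing assumptions on $\mathcal{I}$: $\mathcal{I}$ is a $\sigma$-ideal of subsets of $\mathbb{R}$ such that $\mathbb{R}\notin\mathcal{I}$; $x+I\in\mathcal{I}$ and $xI\in\mathcal{I}$ for all $x\in\mathbb{R}$, $I\in\mathcal{I}$; every member of $\mathcal{I}$ is contained in a Borel member of $\mathcal{I}$; and for all Borel $A,B\notin\mathcal{I}$ the set $A-B$ has nonempty interior. A set $L\subseteq\mathbb{R}$ is $\mathcal{I}$-Luzin if $|L|=\mathfrak{c}$ and $L\cap I$ is countable for every $I\in\mathcal{I}$; it is strong $\mathcal{I}$-Luzin if moreover $L\cap B$ is uncountable for every Borel set $B\notin\mathcal{I}$. *)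

theory Defs
  imports "HOL-Analysis.Analysis" "HOL-Library.Equipollence"
begin

definition CH :: bool where
  "CH \<longleftrightarrow> (\<forall>A :: real set. \<not> countable A \<longrightarrow> A \<approx> (UNIV :: real set))"

definition sigma_ideal :: "real set set \<Rightarrow> bool" where
  "sigma_ideal \<I> \<longleftrightarrow>
     {} \<in> \<I> \<and>
     (\<forall>A B. A \<in> \<I> \<and> B \<subseteq> A \<longrightarrow> B \<in> \<I>) \<and>
     (\<forall>F. countable F \<and> F \<subseteq> \<I> \<longrightarrow> \<Union>F \<in> \<I>)"

definition standing_assumptions :: "real set set \<Rightarrow> bool" where
  "standing_assumptions \<I> \<longleftrightarrow>
     sigma_ideal \<I> \<and>
     (UNIV :: real set) \<notin> \<I> \<and>
     (\<forall>x I. I \<in> \<I> \<longrightarrow> (\<lambda>y. x + y) ` I \<in> \<I>) \<and>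
     (\<forall>x I. I \<in> \<I> \<longrightarrow> (\<lambda>y. x * y) ` I \<in> \<I>) \<and>
     (\<forall>I \<in> \<I>. \<exists>B \<in> sets borel. B \<in> \<I> \<and> I \<subseteq> B) \<and>
     (\<forall>A B. A \<in> sets borel \<and> B \<in> sets borel \<and> A \<notin> \<I> \<and> B \<notin> \<I> \<longrightarrow>
        interior {a - b | a b. a \<in> A \<and> b \<in> B} \<noteq> {})"

definition I_Luzin :: "real set set \<Rightarrow> real set \<Rightarrow> bool" where
  "I_Luzin \<I> L \<longleftrightarrow> L \<approx> (UNIV :: real set) \<and> (\<forall>I \<in> \<I>. countable (L \<inter> I))"

definition strong_I_Luzin :: "real set set \<Rightarrow> real set \<Rightarrow> bool" where
  "strong_I_Luzin \<I> L \<longleftrightarrow> I_Luzin \<I> L \<and>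
     (\<forall>B \<in> sets borel. B \<notin> \<I> \<longrightarrow> \<not> countable (L \<inter> B))"

end

theory Submission
  imports Defs
begin

(*
  CH yields a well-order of the reals in which every proper initial segment is
  countable (an "omega_1-like" order).  Building the Borel sets in levels along this
  order shows that there are at most continuum many of them, so they can be
  enumerated as E gamma by reals.  A surjection code from the reals onto real
  sequences lets each stage alpha name a colour code alpha 0 and a Borel set
  E (code alpha 1), with every such pair named at continuum many stages.

  By transfinite recursion we choose distinct points point alpha in the named Borel
  set (when it is I-positive), avoiding every I-small set E gamma with gamma < alpha.
  Giving point alpha the colour code alpha 0, and every other real its own value as
  colour, the colour classes form the partition: a member of I lies in some I-small
  E gamma, which contains only the countably many points of stages up to gamma, while
  an I-positive Borel set receives uncountably many points of every colour.
*)

section \<open>Sets of size at most continuum\<close>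

lemma surj_real_to_real_seqs: "\<exists>\<sigma> :: real \<Rightarrow> nat \<Rightarrow> real. surj \<sigma>"
proof -
  obtain e :: "nat set \<Rightarrow> real" where e: "bij e"
    using nat_sets_eqpoll_reals unfolding eqpoll_def by blast
  define split :: "nat set \<Rightarrow> nat \<Rightarrow> nat set" where
    "split S n = {m. prod_encode (n, m) \<in> S}" for S n
  have "surj split"
  proof (rule surjI)
    fix f :: "nat \<Rightarrow> nat set"
    show "split {k. snd (prod_decode k) \<in> f (fst (prod_decode k))} = f"
      by (auto simp: split_def fun_eq_iff)
  qed
  define \<sigma> where "\<sigma> x n = e (split (inv e x) n)" for x n
  have "\<phi> \<in> range \<sigma>" for \<phi>
  proof -
    obtain S where S: "split S = (\<lambda>n. inv e (\<phi> n))"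
      using \<open>surj split\<close> by (metis surjD)
    have "\<sigma> (e S) = \<phi>"
      using e S by (simp add: \<sigma>_def fun_eq_iff bij_is_inj bij_is_surj inv_f_f surj_f_inv_f)
    then show ?thesis by (metis rangeI)
  qed
  then show ?thesis by blast
qed

abbreviation le_continuum :: "'a set \<Rightarrow> bool" where
  "le_continuum A \<equiv> A \<lesssim> (UNIV :: real set)"

lemma le_continuum_subset: "A \<subseteq> B \<Longrightarrow> le_continuum B \<Longrightarrow> le_continuum A"
  by (rule lepoll_trans[OF subset_imp_lepoll])

lemma le_continuum_image: "le_continuum A \<Longrightarrow> le_continuum (f ` A)"
  by (rule lepoll_trans[OF image_lepoll])

lemma le_continuum_UN:
  assumes "\<And>c. c \<in> C \<Longrightarrow> le_continuum (P c)"
  shows "le_continuum (\<Union>c \<in> (C :: real set). P c)"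
proof -
  obtain \<sigma> :: "real \<Rightarrow> nat \<Rightarrow> real" where \<sigma>: "surj \<sigma>"
    using surj_real_to_real_seqs by blast
  have "\<forall>c\<in>C. \<exists>g :: real \<Rightarrow> _. P c \<subseteq> range g"
    using assms by (simp add: lepoll_iff)
  then obtain g :: "real \<Rightarrow> real \<Rightarrow> _" where g: "\<And>c. c \<in> C \<Longrightarrow> P c \<subseteq> range (g c)"
    by metis
  have "(\<Union>c\<in>C. P c) \<subseteq> range (\<lambda>x. g (\<sigma> x 0) (\<sigma> x 1))"
  proof
    fix y assume "y \<in> (\<Union>c\<in>C. P c)"
    then obtain c z where "c \<in> C" "y = g c z" using g by blast
    moreover obtain x where "\<sigma> x = (\<lambda>n. if n = 0 then c else z)"
      using \<sigma> by (metis surjD)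
    ultimately have "y = g (\<sigma> x 0) (\<sigma> x 1)" by simp
    then show "y \<in> range (\<lambda>x. g (\<sigma> x 0) (\<sigma> x 1))" by blast
  qed
  then show ?thesis unfolding lepoll_iff by blast
qed

lemma le_continuum_Un: "le_continuum A \<Longrightarrow> le_continuum B \<Longrightarrow> le_continuum (A \<union> B)"
  using le_continuum_UN[of "{0, 1}" "\<lambda>c. if c = 0 then A else B"] by (simp add: Un_commute)

lemma le_continuum_seqs:
  assumes "le_continuum A"
  shows "le_continuum {f :: nat \<Rightarrow> 'a. range f \<subseteq> A}"
proof -
  obtain \<sigma> :: "real \<Rightarrow> nat \<Rightarrow> real" where \<sigma>: "surj \<sigma>"
    using surj_real_to_real_seqs by blast
  obtain g :: "real \<Rightarrow> 'a" where g: "A \<subseteq> range g"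
    using assms by (auto simp: lepoll_iff)
  have "{f :: nat \<Rightarrow> 'a. range f \<subseteq> A} \<subseteq> range (\<lambda>x. g \<circ> \<sigma> x)"
  proof
    fix f :: "nat \<Rightarrow> 'a" assume "f \<in> {f. range f \<subseteq> A}"
    then have "\<forall>n. \<exists>y. f n = g y" using g by blast
    then obtain h where "\<And>n. f n = g (h n)" by metis
    moreover obtain x where "\<sigma> x = h" using \<sigma> by (metis surjD)
    ultimately have "f = g \<circ> \<sigma> x" by auto
    then show "f \<in> range (\<lambda>x. g \<circ> \<sigma> x)" by blast
  qed
  then show ?thesis unfolding lepoll_iff by blast
qed

section \<open>An omega_1-like well-order of the reals\<close>

locale omega1_like_order =
  fixes lt :: "real \<Rightarrow> real \<Rightarrow> bool"
  assumes wf_lt: "wf {(x, y). lt x y}"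
    and lt_linear: "\<And>x y. lt x y \<or> x = y \<or> lt y x"
    and countable_initial_segment: "\<And>a. countable {x. lt x a}"

text \<open>CH provides such an order: in the initial well-order of the reals every proper
  initial segment has cardinality below continuum, hence is countable by CH.\<close>

lemma CH_omega1_like_order:
  assumes "CH"
  shows "\<exists>lt. omega1_like_order lt"
proof -
  define r where "r = card_of (UNIV :: real set)"
  have "well_order_on UNIV r" unfolding r_def by (rule card_of_well_order_on)
  then have wf: "wf (r - Id)" and tot: "total_on UNIV r"
    unfolding well_order_on_def linear_order_on_def by auto
  define lt where "lt x y \<longleftrightarrow> (x, y) \<in> r \<and> x \<noteq> y" for x y
  have "countable {x. lt x a}" for a
  proof (rule ccontr)
    assume "\<not> countable {x. lt x a}"
    moreover have "{x. lt x a} = underS r a" unfolding lt_def underS_def by auto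
    ultimately have "underS r a \<approx> (UNIV :: real set)"
      using assms unfolding CH_def by auto
    then have "ordIso2 (card_of (underS r a)) r"
      unfolding r_def eqpoll_iff_card_of_ordIso .
    moreover have "ordLess2 (card_of (underS r a)) r"
      unfolding r_def by (rule card_of_underS) (simp_all add: card_of_card_order_on Field_card_of)
    ultimately show False using not_ordLess_ordIso by blast
  qed
  moreover have "{(x, y). lt x y} = r - Id" unfolding lt_def by auto
  moreover have "lt x y \<or> x = y \<or> lt y x" for x y
    using tot unfolding total_on_def lt_def by auto
  ultimately have "omega1_like_order lt"
    using wf by unfold_locales simp_all
  then show ?thesis by blast
qed

context omega1_like_order
begin

lemma countable_has_strict_upper_bound:
  assumes "countable S"
  shows "\<exists>\<eta>. \<forall>s\<in>S. lt s \<eta>"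
proof -
  have "countable (S \<union> (\<Union>s\<in>S. {x. lt x s}))"
    using assms countable_initial_segment by auto
  then obtain \<eta> where "\<eta> \<notin> S \<union> (\<Union>s\<in>S. {x. lt x s})"
    using uncountable_UNIV_real by (metis UNIV_eq_I)
  then show ?thesis using lt_linear by blast
qed

section \<open>There are at most continuum many Borel sets\<close>

inductive borel_level :: "real \<Rightarrow> real set \<Rightarrow> bool" where
  generator: "X \<in> insert {} (range atMost) \<Longrightarrow> borel_level \<alpha> X"
| complement: "lt \<beta> \<alpha> \<Longrightarrow> borel_level \<beta> X \<Longrightarrow> borel_level \<alpha> (- X)"
| countable_union: "(\<And>n::nat. \<exists>\<beta>. lt \<beta> \<alpha> \<and> borel_level \<beta> (F n)) \<Longrightarrow> borel_level \<alpha> (\<Union>n. F n)"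

text \<open>Each level has at most continuum many members, by induction along the order:
  the levels below alpha are indexed by a countable set of reals.\<close>

lemma borel_level_le_continuum: "le_continuum {X. borel_level \<alpha> X}"
  using wf_lt
proof (induction \<alpha> rule: wf_induct_rule)
  case (less \<alpha>)
  define Below where "Below = (\<Union>\<beta>\<in>{\<beta>. lt \<beta> \<alpha>}. {X. borel_level \<beta> X})"
  have "le_continuum Below"
    unfolding Below_def by (rule le_continuum_UN) (use less in auto)
  then have "le_continuum (insert {} (range atMost) \<union> uminus ` Below
      \<union> (\<lambda>F. \<Union> (range F)) ` {F :: nat \<Rightarrow> real set. range F \<subseteq> Below})"
    using le_continuum_Un[OF image_lepoll image_lepoll, of "\<lambda>_. {}" atMost]
    by (intro le_continuum_Un le_continuum_image le_continuum_seqs) simp_all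
  moreover have "{X. borel_level \<alpha> X} \<subseteq> insert {} (range atMost) \<union> uminus ` Below
      \<union> (\<lambda>F. \<Union> (range F)) ` {F :: nat \<Rightarrow> real set. range F \<subseteq> Below}"
  proof
    fix X assume "X \<in> {X. borel_level \<alpha> X}"
    then have "borel_level \<alpha> X" by simp
    then show "X \<in> insert {} (range atMost) \<union> uminus ` Below
      \<union> (\<lambda>F. \<Union> (range F)) ` {F :: nat \<Rightarrow> real set. range F \<subseteq> Below}"
    proof cases
      case (complement \<beta> Y)
      then show ?thesis unfolding Below_def by blast
    next
      case (countable_union F)
      then have "range F \<subseteq> Below" unfolding Below_def by blast
      then show ?thesis using countable_union(1) by blast
    qed auto
  qed
  ultimately show ?case by (rule le_continuum_subset[rotated])
qed

text \<open>Every Borel set occurs at some level: the levels are closed under complements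
  and countable unions, since countably many reals have a common strict upper bound.\<close>

lemma borel_in_some_level:
  assumes "X \<in> sets borel"
  shows "\<exists>\<alpha>. borel_level \<alpha> X"
proof -
  have "X \<in> sigma_sets UNIV (range (\<lambda>a::real. {..a}))"
    using assms by (simp add: borel_eq_atMost)
  then show ?thesis
  proof induction
    case (Basic a)
    then show ?case by (blast intro: generator)
  next
    case Empty
    then show ?case by (blast intro: generator)
  next
    case (Compl X)
    then obtain \<beta> where "borel_level \<beta> X" by blast
    moreover obtain \<alpha> where "lt \<beta> \<alpha>"
      using countable_has_strict_upper_bound[of "{\<beta>}"] by auto
    ultimately show ?case by (metis complement Compl_eq_Diff_UNIV)
  next
    case (Union F)
    then obtain \<beta> where \<beta>: "\<And>n. borel_level (\<beta> n) (F n)" by metis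
    obtain \<alpha> where "\<forall>s\<in>range \<beta>. lt s \<alpha>"
      using countable_has_strict_upper_bound[of "range \<beta>"] by auto
    then have "borel_level \<alpha> (\<Union>n. F n)"
      using \<beta> by (intro countable_union) blast
    then show ?case by blast
  qed
qed

lemma borel_le_continuum: "le_continuum (sets (borel :: real measure))"
proof -
  have "sets borel \<subseteq> (\<Union>\<alpha>\<in>(UNIV :: real set). {X. borel_level \<alpha> X})"
    using borel_in_some_level by blast
  moreover have "le_continuum (\<Union>\<alpha>\<in>(UNIV :: real set). {X. borel_level \<alpha> X})"
    by (rule le_continuum_UN) (rule borel_level_le_continuum)
  ultimately show ?thesis by (rule le_continuum_subset)
qed

end

lemma CH_borel_enumeration:
  assumes "CH"
  shows "\<exists>E :: real \<Rightarrow> real set. range E = sets borel"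
proof -
  obtain lt where "omega1_like_order lt" using CH_omega1_like_order[OF assms] by blast
  then obtain g :: "real \<Rightarrow> real set" where g: "sets borel \<subseteq> range g"
    using omega1_like_order.borel_le_continuum unfolding lepoll_iff by blast
  define E where "E x = (if g x \<in> sets borel then g x else {})" for x
  have "range E = sets borel"
    using g unfolding E_def by (auto simp: image_iff)
  then show ?thesis by blast
qed

lemma sigma_ideal_subset: "sigma_ideal I \<Longrightarrow> A \<in> I \<Longrightarrow> B \<subseteq> A \<Longrightarrow> B \<in> I"
  unfolding sigma_ideal_def by blast

lemma sigma_ideal_countable_Union: "sigma_ideal I \<Longrightarrow> countable F \<Longrightarrow> F \<subseteq> I \<Longrightarrow> \<Union>F \<in> I"
  unfolding sigma_ideal_def by blast

lemma sigma_ideal_Un: "sigma_ideal I \<Longrightarrow> A \<in> I \<Longrightarrow> B \<in> I \<Longrightarrow> A \<union> B \<in> I"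
  using sigma_ideal_countable_Union[of I "{A, B}"] by simp

lemma standing_assumptionsD:
  assumes "standing_assumptions I"
  shows "sigma_ideal I" and "UNIV \<notin> I"
    and "\<And>x A. A \<in> I \<Longrightarrow> (\<lambda>y. x + y) ` A \<in> I"
    and "\<And>A. A \<in> I \<Longrightarrow> \<exists>B \<in> sets borel. B \<in> I \<and> A \<subseteq> B"
    and "\<And>A B. A \<in> sets borel \<Longrightarrow> B \<in> sets borel \<Longrightarrow> A \<notin> I \<Longrightarrow> B \<notin> I \<Longrightarrow>
           interior {a - b | a b. a \<in> A \<and> b \<in> B} \<noteq> {}"
  using assms unfolding standing_assumptions_def by auto

text \<open>The ideal contains all countable sets: \<open>{0}\<close> lies in it because
  \<open>{0} - {0}\<close> has empty interior, and the other singletons are translates of it.\<close>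

lemma standing_countable_in_ideal:
  assumes "standing_assumptions I" and "countable S"
  shows "S \<in> I"
proof -
  have "{0::real} \<in> I"
  proof (rule ccontr)
    assume "{0::real} \<notin> I"
    moreover have "{0::real} \<in> sets borel" by (simp add: borel_closed)
    ultimately have "interior {a - b | a b. a \<in> {0::real} \<and> b \<in> {0::real}} \<noteq> {}"
      using standing_assumptionsD(5)[OF assms(1)] by blast
    moreover have "{a - b | a b. a \<in> {0::real} \<and> b \<in> {0::real}} = {0}" by auto
    ultimately show False by simp
  qed
  then have "{x} \<in> I" for x
    using standing_assumptionsD(3)[OF assms(1), of "{0}" x] by simp
  then have "\<Union>((\<lambda>x. {x}) ` S) \<in> I"
    using standing_assumptionsD(1)[OF assms(1)] assms(2)
    by (intro sigma_ideal_countable_Union) auto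
  then show ?thesis by simp
qed

section \<open>The construction\<close>

locale luzin_construction = omega1_like_order +
  fixes I :: "real set set" and E :: "real \<Rightarrow> real set" and code :: "real \<Rightarrow> nat \<Rightarrow> real"
  assumes standing: "standing_assumptions I"
    and E_range: "range E = sets borel"
    and code_surj: "surj code"
begin

lemmas ideal = standing_assumptionsD(1)[OF standing]
  and UNIV_notin_ideal = standing_assumptionsD(2)[OF standing]
  and borel_hull = standing_assumptionsD(4)[OF standing]

text \<open>At stage alpha the new point must lie in the I-positive Borel set coded by
  alpha (or anywhere, if the code names a set in I) and must avoid the I-small Borel
  sets enumerated before alpha, whose union is still in I.\<close>

definition target :: "real \<Rightarrow> real set" where
  "target \<alpha> = (if E (code \<alpha> 1) \<notin> I then E (code \<alpha> 1) else UNIV)"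

definition forbidden :: "real \<Rightarrow> real set" where
  "forbidden \<alpha> = \<Union>(E ` {\<gamma>. lt \<gamma> \<alpha>} \<inter> I)"

definition point :: "real \<Rightarrow> real" where
  "point = wfrec {(\<beta>, \<alpha>). lt \<beta> \<alpha>}
     (\<lambda>f \<alpha>. SOME p. p \<in> target \<alpha> \<and> p \<notin> forbidden \<alpha> \<and> p \<notin> f ` {\<beta>. lt \<beta> \<alpha>})"

lemma point_unfold:
  "point \<alpha> = (SOME p. p \<in> target \<alpha> \<and> p \<notin> forbidden \<alpha> \<and> p \<notin> point ` {\<beta>. lt \<beta> \<alpha>})"
proof -
  have "cut point {(\<beta>, \<alpha>). lt \<beta> \<alpha>} \<alpha> ` {\<beta>. lt \<beta> \<alpha>} = point ` {\<beta>. lt \<beta> \<alpha>}"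
    by (auto simp: cut_apply)
  then show ?thesis
    unfolding point_def by (subst wfrec[OF wf_lt]) (simp add: point_def)
qed

text \<open>A suitable point exists: otherwise the I-positive target would be covered by
  the forbidden set and countably many earlier points, a set in I.\<close>

lemma point_spec:
  "point \<alpha> \<in> target \<alpha> \<and> point \<alpha> \<notin> forbidden \<alpha> \<and> point \<alpha> \<notin> point ` {\<beta>. lt \<beta> \<alpha>}"
proof -
  have "forbidden \<alpha> \<in> I"
    unfolding forbidden_def using ideal countable_initial_segment[of \<alpha>]
    by (intro sigma_ideal_countable_Union) auto
  moreover have "point ` {\<beta>. lt \<beta> \<alpha>} \<in> I"
    using standing countable_initial_segment[of \<alpha>] by (simp add: standing_countable_in_ideal)
  ultimately have "forbidden \<alpha> \<union> point ` {\<beta>. lt \<beta> \<alpha>} \<in> I"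
    by (rule sigma_ideal_Un[OF ideal])
  moreover have "target \<alpha> \<notin> I"
    unfolding target_def using UNIV_notin_ideal by auto
  ultimately have "\<not> target \<alpha> \<subseteq> forbidden \<alpha> \<union> point ` {\<beta>. lt \<beta> \<alpha>}"
    using ideal sigma_ideal_subset by blast
  then have "\<exists>p. p \<in> target \<alpha> \<and> p \<notin> forbidden \<alpha> \<and> p \<notin> point ` {\<beta>. lt \<beta> \<alpha>}"
    by blast
  then show ?thesis unfolding point_unfold[of \<alpha>] by (rule someI_ex)
qed

text \<open>Each point differs from all earlier ones, so distinct stages give distinct points.\<close>

lemma inj_point: "inj point"
proof (rule injI)
  fix \<alpha> \<beta> assume "point \<alpha> = point \<beta>"
  then show "\<alpha> = \<beta>"
    using point_spec[of \<alpha>] point_spec[of \<beta>] lt_linear[of \<alpha> \<beta>] by (metis image_eqI mem_Collect_eq)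
qed

definition colour :: "real \<Rightarrow> real" where
  "colour p = (if p \<in> range point then code (inv point p) 0 else p)"

definition part :: "real \<Rightarrow> real set" where
  "part r = {p. colour p = r}"

lemma colour_point: "colour (point \<alpha>) = code \<alpha> 0"
  unfolding colour_def using inj_point by simp

lemma part_disjoint: "disjoint_family part"
  unfolding disjoint_family_on_def part_def by auto

lemma part_cover: "(\<Union>r. part r) = UNIV"
  unfolding part_def by auto

text \<open>A set in I lies in an I-small Borel set \<open>E \<gamma>\<close>, which all points of later
  stages avoid; so it meets a colour class only in countably many points.\<close>

lemma part_countable_on_ideal:
  assumes "A \<in> I"
  shows "countable (part r \<inter> A)"
proof -
  obtain \<gamma> where \<gamma>: "E \<gamma> \<in> I" "A \<subseteq> E \<gamma>"
    using borel_hull[OF assms] unfolding E_range[symmetric] by blast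
  have "part r \<inter> A \<subseteq> point ` insert \<gamma> {\<beta>. lt \<beta> \<gamma>} \<union> {r}"
  proof
    fix p assume p: "p \<in> part r \<inter> A"
    show "p \<in> point ` insert \<gamma> {\<beta>. lt \<beta> \<gamma>} \<union> {r}"
    proof (cases "p \<in> range point")
      case True
      then obtain \<alpha> where \<alpha>: "p = point \<alpha>" by blast
      have "\<not> lt \<gamma> \<alpha>"
      proof
        assume "lt \<gamma> \<alpha>"
        then have "E \<gamma> \<subseteq> forbidden \<alpha>" unfolding forbidden_def using \<gamma>(1) by blast
        then show False using point_spec[of \<alpha>] p \<gamma>(2) \<alpha> by blast
      qed
      then show ?thesis using \<alpha> lt_linear[of \<alpha> \<gamma>] by auto
    next
      case False
      then show ?thesis using p unfolding part_def colour_def by simp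
    qed
  qed
  moreover have "countable (point ` insert \<gamma> {\<beta>. lt \<beta> \<gamma>} \<union> {r})"
    using countable_initial_segment[of \<gamma>] by simp
  ultimately show ?thesis by (rule countable_subset)
qed

text \<open>An I-positive Borel set \<open>E \<delta>\<close> is the target of every stage alpha coding the
  pair (r, delta); there are uncountably many such alpha, and their points are
  distinct members of \<open>E \<delta>\<close> of colour r.\<close>

lemma part_uncountable_on_positive:
  assumes "B \<in> sets borel" "B \<notin> I"
  shows "\<not> countable (part r \<inter> B)"
proof
  assume countable_part: "countable (part r \<inter> B)"
  obtain \<delta> where \<delta>: "B = E \<delta>" using assms(1) unfolding E_range[symmetric] by blast
  define S where "S = {\<alpha>. code \<alpha> 0 = r \<and> code \<alpha> 1 = \<delta>}"
  have "point ` S \<subseteq> part r \<inter> B"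
  proof
    fix p assume "p \<in> point ` S"
    then obtain \<alpha> where \<alpha>: "\<alpha> \<in> S" "p = point \<alpha>" by blast
    then have "target \<alpha> = B" using \<delta> assms(2) unfolding target_def S_def by simp
    then show "p \<in> part r \<inter> B"
      using point_spec[of \<alpha>] \<alpha> colour_point unfolding part_def S_def by simp
  qed
  then have "countable (point ` S)" using countable_part by (rule countable_subset)
  then have "countable S"
    by (rule countable_image_inj_on) (rule inj_on_subset[OF inj_point subset_UNIV])
  moreover have "UNIV \<subseteq> (\<lambda>\<alpha>. code \<alpha> 2) ` S"
  proof
    fix c :: real
    obtain \<alpha> where "code \<alpha> = (\<lambda>n. if n = 0 then r else if n = 1 then \<delta> else c)"
      using code_surj by (metis surjD)
    then have "\<alpha> \<in> S" "c = code \<alpha> 2" unfolding S_def by (auto simp: fun_eq_iff)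
    then show "c \<in> (\<lambda>\<alpha>. code \<alpha> 2) ` S" by blast
  qed
  ultimately show False
    using uncountable_UNIV_real countable_subset by blast
qed

end

text \<open>Each colour class meets the I-positive set UNIV uncountably, so by CH it has
  size continuum; the two lemmas above are exactly the remaining Luzin conditions.\<close>

theorem mainTheorem3:
  fixes \<I> :: "real set set"
  assumes "CH"
    and "standing_assumptions \<I>"
  shows "\<exists>L :: real \<Rightarrow> real set.
           disjoint_family L \<and> (\<Union>r. L r) = UNIV \<and> (\<forall>r. strong_I_Luzin \<I> (L r))"
proof -
  obtain lt where "omega1_like_order lt" using CH_omega1_like_order[OF assms(1)] by blast
  moreover obtain E :: "real \<Rightarrow> real set" where "range E = sets borel"
    using CH_borel_enumeration[OF assms(1)] by blast
  moreover obtain code :: "real \<Rightarrow> nat \<Rightarrow> real" where "surj code"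
    using surj_real_to_real_seqs by blast
  ultimately interpret luzin_construction lt \<I> E code
    using assms(2) by (simp add: luzin_construction_def luzin_construction_axioms_def)
  have "strong_I_Luzin \<I> (part r)" for r
  proof -
    have "\<not> countable (part r)"
      using part_uncountable_on_positive[of UNIV r] UNIV_notin_ideal by simp
    then have "part r \<approx> (UNIV :: real set)" using assms(1) unfolding CH_def by simp
    then show ?thesis unfolding strong_I_Luzin_def I_Luzin_def
      using part_countable_on_ideal part_uncountable_on_positive by blast
  qed
  then show ?thesis using part_disjoint part_cover by blast
qed

end
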